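(* Let $\alpha\in(1,2)$ and let $p\ge2$ be an integer. There is a constant $c^L_{p,\alpha}$ depending only on $p$ and $\alpha$ such that for every $n\ge1$ and all $i,j\in\{2,\dots,n+p-1\}$, $$|(A_n^L)_{i-1,j-1}|\le\begin{cases}0, & \eta_i\le\xi_j,\\ c^L_{p,\alpha}\,n^\alpha, & \xi_j<\eta_i\le\xi_{j+p+1}+\frac1n,\\ c^L_{p,\alpha}\,(\eta_i-\xi_{j+p+1})^{-\alpha}, & \xi_{j+p+1}+\frac1n<\eta_i.\end{cases}$$
   Context: Fix integers $p\ge2$, $n\ge1$. The uniform open knot sequence on $[0,1]$ is $\xi_1=\dots=\xi_{p+1}=0$, $\xi_{i+p+1}=i/n$ for $i=0,\dots,n$, $\xi_{p+n+1}=\dots=\xi_{2p+n+1}=1$. The B-splines are defined by $N^0_i=\mathbf 1_{[\xi_i,\xi_{i+1})}$ for $1\le i\le n+2p$, and $N^k_i(x)=\frac{x-\xi_i}{\xi_{i+k}-\xi_i}N^{k-1}_i(x)+\frac{\xi_{i+k+1}-x}{\xi_{i+k+1}-\xi_{i+1}}N^{k-1}_{i+1}(x)$ for $1\le k\le p$, $1\le i\le n+2p-k$ (fractions with zero denominator are zero); $N^p_i$, $i=1,\dots,n+p$, are the degree-$p$ B-splines on $[0,1]$. The Greville abscissae are $\eta_i=\frac{\xi_{i+1}+\dots+\xi_{i+p}}{p}$, $i=2,\dots,n+p-1$. For $\alpha\in(1,2)$ the left Riemann–Liouville derivative on $[0,1]$ is $D^\alpha_{0,x}u(x)=\frac{1}{\Gamma(2-\alpha)}\frac{d^2}{dx^2}\int_0^x(x-y)^{1-\alpha}u(y)\,dy$.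 The matrix $A_n^L$ is the $(n+p-2)\times(n+p-2)$ matrix with $(A_n^L)_{i,j}=D^\alpha_{0,x}N^p_{j+1}(\eta_{i+1})$, $i,j=1,\dots,n+p-2$. *)

theory Defs
  imports "HOL-Analysis.Analysis"
begin

text \<open>Uniform open knot vector on [0,1], 1-based: knot p n k = xi_k, k = 1..2p+n+1.\<close>
definition knot :: "nat \<Rightarrow> nat \<Rightarrow> nat \<Rightarrow> real" where
  "knot p n k = (if k \<le> p + 1 then 0
                 else if k \<le> p + n + 1 then real (k - (p + 1)) / real n
                 else 1)"

text \<open>B-splines N^k_i of degree k (Cox-de Boor); division by zero yields 0 in HOL,
  matching the convention that fractions with zero denominator are zero.\<close>
fun bspline :: "nat \<Rightarrow> nat \<Rightarrow> nat \<Rightarrow> nat \<Rightarrow> real \<Rightarrow> real" where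
  "bspline p n 0 i x =
     (if knot p n i \<le> x \<and> x < knot p n (i + 1) then 1 else 0)"
| "bspline p n (Suc k) i x =
     (x - knot p n i) / (knot p n (i + Suc k) - knot p n i) * bspline p n k i x
   + (knot p n (i + Suc k + 1) - x) / (knot p n (i + Suc k + 1) - knot p n (i + 1))
       * bspline p n k (i + 1) x"

definition greville :: "nat \<Rightarrow> nat \<Rightarrow> nat \<Rightarrow> real" where
  "greville p n i = (\<Sum>k = i + 1..i + p. knot p n k) / real p"

definition RL_left :: "real \<Rightarrow> (real \<Rightarrow> real) \<Rightarrow> real \<Rightarrow> real" where
  "RL_left \<alpha> u x = 1 / Gamma (2 - \<alpha>) *
     deriv (deriv (\<lambda>t. integral {0..t} (\<lambda>y. (t - y) powr (1 - \<alpha>) * u y))) x"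

text \<open>Entries of the matrix A_n^L (1-based indices i,j = 1..n+p-2).\<close>
definition AL :: "real \<Rightarrow> nat \<Rightarrow> nat \<Rightarrow> nat \<Rightarrow> nat \<Rightarrow> real" where
  "AL \<alpha> p n i j = RL_left \<alpha> (bspline p n p (j + 1)) (greville p n (i + 1))"

end

theory Submission
  imports Defs "HOL-Computational_Algebra.Polynomial"
begin

(* A Greville abscissa x lies on the grid of mesh 1/(n p); hence near x the
   B-spline N_j is a polynomial, expanded around the last knot c < x, plus a multiple of
   (y - x)_+^p, and x - c lies between 1/(n p) and 1/n.  Splitting the fractional integral at c,
   the second derivative at x becomes the integral of the smooth kernel (x - y)^(-1-alpha)
   against N_j over [0, c] plus explicit Beta-function terms in powers of x - c.  The Taylor
   coefficients of the pieces grow like n^r, so every term is O(n^alpha).  If the support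
   [xi_j, xi_(j+p+1)) of N_j ends more than 1/n to the left of x, only the kernel integral
   remains; it is at most |supp N_j| (x - xi_(j+p+1))^(-1-alpha), and |supp N_j| <= (p+1)/n
   <= (p+1) (x - xi_(j+p+1)).  If x lies left of the support, everything vanishes. *)

section \<open>Knots\<close>

definition knot_index :: "nat \<Rightarrow> nat \<Rightarrow> nat \<Rightarrow> nat" where
  "knot_index p n k = min (k - (p + 1)) n"

lemma knot_eq_knot_index: "n \<ge> 1 \<Longrightarrow> knot p n k = real (knot_index p n k) / real n"
  by (auto simp: knot_def knot_index_def min_def)

lemma knot_interior: "n \<ge> 1 \<Longrightarrow> q \<le> n \<Longrightarrow> knot p n (q + p + 1) = real q / real n"
  by (simp add: knot_eq_knot_index knot_index_def)

lemma knot_nonneg: "n \<ge> 1 \<Longrightarrow> 0 \<le> knot p n k"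
  by (simp add: knot_eq_knot_index)

lemma knot_mono: "n \<ge> 1 \<Longrightarrow> k \<le> l \<Longrightarrow> knot p n k \<le> knot p n l"
  by (auto simp: knot_eq_knot_index knot_index_def divide_right_mono)

lemma knot_diff_le:
  assumes "n \<ge> 1" "k \<le> l"
  shows "knot p n l - knot p n k \<le> real (l - k) / real n"
proof -
  have "real (knot_index p n l) - real (knot_index p n k) \<le> real (l - k)"
    using assms(2) by (auto simp: knot_index_def min_def)
  then show ?thesis
    using assms(1) by (simp add: knot_eq_knot_index diff_divide_distrib[symmetric] divide_right_mono)
qed

lemma abs_knot_diff_le:
  assumes "n \<ge> 1" "k \<le> l" "l - k \<le> s"
  shows "\<bar>knot p n l - knot p n k\<bar> \<le> real s / real n"
proof -
  have "real (l - k) / real n \<le> real s / real n"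
    using assms(3) by (intro divide_right_mono) auto
  then show ?thesis
    using knot_diff_le[OF assms(1,2), of p] knot_mono[OF assms(1,2), of p] by simp
qed

text \<open>Distinct knots are at least \<open>1 / n\<close> apart, while a zero denominator gives \<open>X / 0 = 0\<close>.\<close>

lemma abs_divide_knot_diff_le:
  assumes n: "n \<ge> 1" and "k \<le> l"
  shows "\<bar>X / (knot p n l - knot p n k)\<bar> \<le> real n * \<bar>X\<bar>"
proof (cases "knot p n l = knot p n k")
  case False
  have "knot_index p n k \<le> knot_index p n l"
    using assms(2) by (auto simp: knot_index_def min_def)
  with False have "1 \<le> real (knot_index p n l) - real (knot_index p n k)"
    using n by (auto simp: knot_eq_knot_index)
  then have gap: "1 / real n \<le> knot p n l - knot p n k"
    using n by (simp add: knot_eq_knot_index diff_divide_distrib[symmetric] divide_right_mono)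
  have "0 < 1 / real n"
    using n by simp
  with gap have D: "0 < knot p n l - knot p n k"
    by linarith
  then have "\<bar>X / (knot p n l - knot p n k)\<bar> = \<bar>X\<bar> / (knot p n l - knot p n k)"
    by (simp add: abs_divide)
  also have "\<dots> \<le> \<bar>X\<bar> / (1 / real n)"
    using gap D n by (intro divide_left_mono) auto
  finally show ?thesis
    by (simp add: mult.commute)
qed simp

section \<open>B-splines: support, size and polynomial pieces\<close>

lemma bspline_nonzero_imp_support:
  assumes "n \<ge> 1" "bspline p n k i x \<noteq> 0"
  shows "knot p n i \<le> x \<and> x < knot p n (i + k + 1)"
  using assms(2)
proof (induction k arbitrary: i)
  case (Suc k)
  have "knot p n i \<le> knot p n (i + 1)" "knot p n (i + k + 1) \<le> knot p n (i + Suc k + 1)"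
    using knot_mono[OF assms(1)] by auto
  moreover have "bspline p n k i x \<noteq> 0 \<or> bspline p n k (i + 1) x \<noteq> 0"
    using Suc.prems by auto
  ultimately show ?case
    using Suc.IH by fastforce
qed (auto split: if_splits)

lemma abs_ratio_le_one:
  fixes a b x :: real
  assumes "a \<le> x" "x \<le> b"
  shows "\<bar>(x - a) / (b - a)\<bar> \<le> 1" "\<bar>(b - x) / (b - a)\<bar> \<le> 1"
  using assms by (cases "b = a"; auto simp: abs_le_iff divide_le_eq_1 le_divide_eq)+

lemma abs_bspline_le:
  assumes "n \<ge> 1"
  shows "\<bar>bspline p n k i x\<bar> \<le> 2 ^ k"
proof (induction k arbitrary: i)
  case (Suc k)
  have weighted: "\<bar>w * bspline p n k l x\<bar> \<le> 2 ^ k"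
    if "bspline p n k l x \<noteq> 0 \<Longrightarrow> \<bar>w\<bar> \<le> 1" for w l
  proof (cases "bspline p n k l x = 0")
    case False
    then have "\<bar>w\<bar> * \<bar>bspline p n k l x\<bar> \<le> 1 * 2 ^ k"
      using that Suc.IH[of l] by (intro mult_mono) auto
    then show ?thesis by (simp add: abs_mult)
  qed simp
  have "\<bar>(x - knot p n i) / (knot p n (i + Suc k) - knot p n i) * bspline p n k i x\<bar> \<le> 2 ^ k"
    using bspline_nonzero_imp_support[OF assms, of p k i x]
    by (intro weighted abs_ratio_le_one(1)) auto
  moreover have "\<bar>(knot p n (i + Suc k + 1) - x) / (knot p n (i + Suc k + 1) - knot p n (i + 1))
      * bspline p n k (i + 1) x\<bar> \<le> 2 ^ k"
    using bspline_nonzero_imp_support[OF assms, of p k "i + 1" x]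
    by (intro weighted abs_ratio_le_one(2)) auto
  ultimately show ?case
    unfolding bspline.simps by (intro order.trans[OF abs_triangle_ineq]) simp
qed simp

text \<open>The polynomial that agrees with \<open>N\<^sup>k\<^sub>i\<close> on the knot interval \<open>[\<xi>\<^sub>m, \<xi>\<^sub>m\<^sub>+\<^sub>1)\<close>,
  in the local variable \<open>y - \<xi>\<^sub>m\<close>.\<close>

fun bspline_piece :: "nat \<Rightarrow> nat \<Rightarrow> nat \<Rightarrow> nat \<Rightarrow> nat \<Rightarrow> real poly" where
  "bspline_piece p n 0 i m = [:if i = m then 1 else 0:]"
| "bspline_piece p n (Suc k) i m =
     smult (1 / (knot p n (i + Suc k) - knot p n i))
       ([:knot p n m - knot p n i, 1:] * bspline_piece p n k i m)
   + smult (1 / (knot p n (i + Suc k + 1) - knot p n (i + 1)))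
       ([:knot p n (i + Suc k + 1) - knot p n m, -1:] * bspline_piece p n k (i + 1) m)"

lemma poly_bspline_piece_Suc:
  "poly (bspline_piece p n (Suc k) i m) (y - knot p n m) =
     (y - knot p n i) / (knot p n (i + Suc k) - knot p n i)
       * poly (bspline_piece p n k i m) (y - knot p n m)
   + (knot p n (i + Suc k + 1) - y) / (knot p n (i + Suc k + 1) - knot p n (i + 1))
       * poly (bspline_piece p n k (i + 1) m) (y - knot p n m)"
  by (simp add: divide_inverse algebra_simps)

lemma bspline_eq_piece:
  assumes "n \<ge> 1" "knot p n m \<le> y" "y < knot p n (m + 1)"
  shows "bspline p n k i y = poly (bspline_piece p n k i m) (y - knot p n m)"
proof (induction k arbitrary: i)
  case 0
  have "knot p n i \<le> y \<and> y < knot p n (i + 1) \<longleftrightarrow> i = m"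
  proof
    assume "knot p n i \<le> y \<and> y < knot p n (i + 1)"
    then have "\<not> i + 1 \<le> m" "\<not> m + 1 \<le> i"
      using assms knot_mono[OF assms(1), of "i + 1" m p] knot_mono[OF assms(1), of "m + 1" i p] by auto
    then show "i = m" by simp
  qed (use assms in auto)
  then show ?case by simp
qed (simp only: bspline.simps poly_bspline_piece_Suc)

lemma bspline_piece_eq_0: "m < i \<or> i + k < m \<Longrightarrow> bspline_piece p n k i m = 0"
  by (induction k arbitrary: i) auto

lemma degree_bspline_piece: "degree (bspline_piece p n k i m) \<le> k"
proof (induction k arbitrary: i)
  case (Suc k)
  have "degree ([:a, b:] * bspline_piece p n k l m) \<le> Suc k" for a b :: real and l
  proof -
    have "degree [:a, b:] \<le> 1" by simp
    then show ?thesis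
      using degree_mult_le[of "[:a, b:]" "bspline_piece p n k l m"] Suc.IH[of l] by linarith
  qed
  then show ?case
    by (simp only: bspline_piece.simps) (intro degree_add_le order.trans[OF degree_smult_le])
qed simp

lemma coeff_bspline_piece_Suc:
  "coeff (bspline_piece p n (Suc k) i m) r =
     ((knot p n m - knot p n i) * coeff (bspline_piece p n k i m) r
        + (if r = 0 then 0 else coeff (bspline_piece p n k i m) (r - 1)))
       / (knot p n (i + Suc k) - knot p n i)
   + ((knot p n (i + Suc k + 1) - knot p n m) * coeff (bspline_piece p n k (i + 1) m) r
        - (if r = 0 then 0 else coeff (bspline_piece p n k (i + 1) m) (r - 1)))
       / (knot p n (i + Suc k + 1) - knot p n (i + 1))"
  by (cases r) (simp_all add: mult_pCons_left divide_inverse algebra_simps)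

fun odd_double_factorial :: "nat \<Rightarrow> real" where
  "odd_double_factorial 0 = 1"
| "odd_double_factorial (Suc k) = (2 * real k + 3) * odd_double_factorial k"

lemma odd_double_factorial_ge_one: "odd_double_factorial k \<ge> 1"
  by (induction k) (auto intro: order.trans[OF _ mult_right_mono[of 1]])

lemma abs_coeff_bspline_piece_le:
  assumes n: "n \<ge> 1"
  shows "\<bar>coeff (bspline_piece p n k i m) r\<bar> \<le> odd_double_factorial k * real n ^ r"
proof (induction k arbitrary: i r)
  case 0
  show ?case using n by (cases r) auto
next
  case (Suc k)
  define N where "N = real n"
  define B where "B = odd_double_factorial k"
  define c where "c l r = coeff (bspline_piece p n k l m) r" for l r
  have N: "N \<ge> 1" using n by (simp add: N_def)
  have IH: "\<bar>c l r\<bar> \<le> B * N ^ r" for l r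
    using Suc.IH by (simp add: c_def N_def B_def)
  have shifted: "\<bar>if r = 0 then 0 else c l (r - 1)\<bar> \<le> B * N ^ r / N" for l
    using IH[of l "r - 1"] N odd_double_factorial_ge_one[of k] by (cases r) (auto simp: B_def field_simps)
  have support: "c l r \<noteq> 0 \<Longrightarrow> l \<le> m \<and> m \<le> l + k" for l
    using bspline_piece_eq_0[of m l k p n] by (force simp: c_def)
  have half: "\<bar>((knot p n b - knot p n a) * c l r + \<sigma> * (if r = 0 then 0 else c l (r - 1)))
      / (knot p n e - knot p n d)\<bar> \<le> (real s + 1) * B * N ^ r"
    if "c l r \<noteq> 0 \<Longrightarrow> a \<le> b \<and> b - a \<le> s" "d \<le> e" "\<bar>\<sigma>\<bar> = 1" for a b d e l s and \<sigma> :: real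
  proof -
    have "\<bar>(knot p n b - knot p n a) * c l r\<bar> \<le> real s / N * (B * N ^ r)"
    proof (cases "c l r = 0")
      case False
      then show ?thesis
        unfolding abs_mult N_def using that(1) abs_knot_diff_le[OF n] IH[of l r]
        by (intro mult_mono) (auto simp: N_def)
    qed (use N odd_double_factorial_ge_one[of k] in \<open>simp add: B_def\<close>)
    then have "N * \<bar>(knot p n b - knot p n a) * c l r + \<sigma> * (if r = 0 then 0 else c l (r - 1))\<bar>
        \<le> N * (real s / N * (B * N ^ r) + B * N ^ r / N)"
      using shifted[of l] that(3) N
      by (intro mult_left_mono order.trans[OF abs_triangle_ineq] add_mono) (auto simp: abs_mult)
    also have "\<dots> = (real s + 1) * B * N ^ r"
      using N by (simp add: field_simps)
    finally show ?thesis
      using abs_divide_knot_diff_le[OF n that(2)] unfolding N_def by (meson order.trans)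
  qed
  have "\<bar>((knot p n m - knot p n i) * c i r + 1 * (if r = 0 then 0 else c i (r - 1)))
      / (knot p n (i + Suc k) - knot p n i)\<bar> \<le> (real k + 1) * B * N ^ r"
    using support[of i] by (intro half) auto
  moreover have "\<bar>((knot p n (i + Suc k + 1) - knot p n m) * c (i + 1) r + (-1) * (if r = 0 then 0 else c (i + 1) (r - 1)))
      / (knot p n (i + Suc k + 1) - knot p n (i + 1))\<bar> \<le> (real (k + 1) + 1) * B * N ^ r"
    using support[of "i + 1"] by (intro half) auto
  ultimately have "\<bar>coeff (bspline_piece p n (Suc k) i m) r\<bar> \<le> (real k + 1) * B * N ^ r + (real (k + 1) + 1) * B * N ^ r"
    unfolding coeff_bspline_piece_Suc c_def[symmetric]
    by (intro order.trans[OF abs_triangle_ineq] add_mono) simp_all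
  also have "\<dots> = odd_double_factorial (Suc k) * real n ^ r"
    by (simp add: B_def N_def algebra_simps)
  finally show ?case .
qed

section \<open>The jump of a B-spline across a simple knot\<close>

definition knot_prod_except :: "nat \<Rightarrow> nat \<Rightarrow> nat \<Rightarrow> nat \<Rightarrow> nat \<Rightarrow> real" where
  "knot_prod_except p n m a b = (\<Prod>l\<in>{a..b}. if l = m then 1 else knot p n l - knot p n m)"

text \<open>The jump of the \<open>k\<close>-th derivative of \<open>N\<^sup>k\<^sub>i\<close> at \<open>\<xi>\<^sub>m\<close>, divided by \<open>k!\<close>
  (the divided-difference formula).\<close>

definition jump_coeff :: "nat \<Rightarrow> nat \<Rightarrow> nat \<Rightarrow> nat \<Rightarrow> nat \<Rightarrow> real" where
  "jump_coeff p n m k i =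
     (if i \<le> m \<and> m \<le> i + k + 1
      then (knot p n (i + k + 1) - knot p n i) / knot_prod_except p n m i (i + k + 1) else 0)"

locale simple_knot =
  fixes p n m :: nat
  assumes n_ge_1: "n \<ge> 1" and m_ge_1: "m \<ge> 1"
    and knot_before: "knot p n (m - 1) < knot p n m"
    and knot_after: "knot p n m < knot p n (m + 1)"
begin

abbreviation \<xi> :: "nat \<Rightarrow> real" where "\<xi> \<equiv> knot p n"

lemma knot_less_m: "l < m \<Longrightarrow> \<xi> l < \<xi> m"
  by (rule le_less_trans[OF knot_mono[OF n_ge_1] knot_before]) simp

lemma knot_greater_m: "m < l \<Longrightarrow> \<xi> m < \<xi> l"
  by (rule less_le_trans[OF knot_after knot_mono[OF n_ge_1]]) simp

lemma knot_prod_except_nonzero: "knot_prod_except p n m a b \<noteq> 0"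
  unfolding knot_prod_except_def using knot_less_m knot_greater_m
  by (auto simp: prod_zero_iff) (metis linorder_neqE_nat less_irrefl)

lemma knot_prod_except_Suc_right:
  "a \<le> Suc b \<Longrightarrow> knot_prod_except p n m a (Suc b) =
     knot_prod_except p n m a b * (if Suc b = m then 1 else \<xi> (Suc b) - \<xi> m)"
  unfolding knot_prod_except_def by simp

lemma knot_prod_except_Suc_left:
  "a \<le> b \<Longrightarrow> knot_prod_except p n m a b =
     (if a = m then 1 else \<xi> a - \<xi> m) * knot_prod_except p n m (Suc a) b"
  unfolding knot_prod_except_def by (simp add: prod.atLeast_Suc_atMost)

lemma jump_coeff_Suc:
  "(y - \<xi> i) / (\<xi> (i + Suc k) - \<xi> i) * jump_coeff p n m k i
   + (\<xi> (i + Suc k + 1) - y) / (\<xi> (i + Suc k + 1) - \<xi> (i + 1)) * jump_coeff p n m k (i + 1)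
   = jump_coeff p n m (Suc k) i * (y - \<xi> m)"
proof -
  define P where "P = knot_prod_except p n m (i + 1) (i + k + 1)"
  have P: "P \<noteq> 0" using knot_prod_except_nonzero by (simp add: P_def)
  have Suc_right: "knot_prod_except p n m (i + 1) (i + k + 2) = P * (if i + k + 2 = m then 1 else \<xi> (i + k + 2) - \<xi> m)"
    using knot_prod_except_Suc_right[of "i + 1" "i + k + 1"] by (simp add: P_def)
  have whole: "knot_prod_except p n m i (i + k + 2) =
      (if i = m then 1 else \<xi> i - \<xi> m) * P * (if i + k + 2 = m then 1 else \<xi> (i + k + 2) - \<xi> m)"
    using knot_prod_except_Suc_left[of i "i + k + 2"] Suc_right by simp
  have old: "knot_prod_except p n m i (i + k + 1) = (if i = m then 1 else \<xi> i - \<xi> m) * P"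
    using knot_prod_except_Suc_left[of i "i + k + 1"] by (simp add: P_def)
  consider "m < i \<or> i + k + 2 < m" | "m = i" | "m = i + k + 2" | "i < m \<and> m \<le> i + k + 1"
    by linarith
  then show ?thesis
  proof cases
    case 1
    then show ?thesis by (auto simp: jump_coeff_def)
  next
    case 2
    have nonzero: "\<xi> (i + k + 1) - \<xi> i \<noteq> 0" "\<xi> (i + k + 2) - \<xi> i \<noteq> 0"
      using knot_greater_m[of "i + k + 1"] knot_greater_m[of "i + k + 2"] 2 by auto
    have J: "jump_coeff p n m k i = (\<xi> (i + k + 1) - \<xi> i) / P"
      "jump_coeff p n m k (i + 1) = 0"
      "jump_coeff p n m (Suc k) i = (\<xi> (i + k + 2) - \<xi> i) / (P * (\<xi> (i + k + 2) - \<xi> i))"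
      using 2 whole old by (simp_all add: jump_coeff_def)
    show ?thesis
      unfolding J using 2 P nonzero by (simp add: field_simps)
  next
    case 3
    have nonzero: "\<xi> (i + k + 2) - \<xi> (i + 1) \<noteq> 0" "\<xi> i - \<xi> m \<noteq> 0"
      using knot_less_m[of "i + 1"] knot_less_m[of i] 3 by auto
    have J: "jump_coeff p n m k i = 0"
      "jump_coeff p n m k (i + 1) = (\<xi> (i + k + 2) - \<xi> (i + 1)) / P"
      "jump_coeff p n m (Suc k) i = (\<xi> (i + k + 2) - \<xi> i) / ((\<xi> i - \<xi> m) * P)"
      using 3 whole Suc_right by (simp_all add: jump_coeff_def)
    show ?thesis
      unfolding J using 3 P nonzero by (simp add: field_simps)
  next
    case 4
    have nonzero: "\<xi> (i + k + 1) - \<xi> i \<noteq> 0" "\<xi> (i + k + 2) - \<xi> (i + 1) \<noteq> 0"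
      "\<xi> i - \<xi> m \<noteq> 0" "\<xi> (i + k + 2) - \<xi> m \<noteq> 0"
      using knot_less_m[of i] knot_greater_m[of "i + k + 2"] knot_mono[OF n_ge_1, of m "i + k + 1" p]
        knot_mono[OF n_ge_1, of "i + 1" m p] 4 by auto
    have J: "jump_coeff p n m k i = (\<xi> (i + k + 1) - \<xi> i) / ((\<xi> i - \<xi> m) * P)"
      "jump_coeff p n m k (i + 1) = (\<xi> (i + k + 2) - \<xi> (i + 1)) / (P * (\<xi> (i + k + 2) - \<xi> m))"
      "jump_coeff p n m (Suc k) i =
         (\<xi> (i + k + 2) - \<xi> i) / ((\<xi> i - \<xi> m) * P * (\<xi> (i + k + 2) - \<xi> m))"
      using 4 whole old Suc_right by (simp_all add: jump_coeff_def)
    have "(y - \<xi> i) / ((\<xi> i - \<xi> m) * P) + (\<xi> (i + k + 2) - y) / (P * (\<xi> (i + k + 2) - \<xi> m))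
        = ((y - \<xi> i) * (\<xi> (i + k + 2) - \<xi> m) + (\<xi> (i + k + 2) - y) * (\<xi> i - \<xi> m))
          / ((\<xi> i - \<xi> m) * P * (\<xi> (i + k + 2) - \<xi> m))"
      using nonzero P by (simp add: add_divide_distrib ac_simps)
    also have "(y - \<xi> i) * (\<xi> (i + k + 2) - \<xi> m) + (\<xi> (i + k + 2) - y) * (\<xi> i - \<xi> m)
        = (\<xi> (i + k + 2) - \<xi> i) * (y - \<xi> m)"
      by (simp add: algebra_simps)
    finally show ?thesis
      unfolding J using nonzero by simp
  qed
qed

lemma poly_bspline_piece_jump:
  "poly (bspline_piece p n k i m) (y - \<xi> m) - poly (bspline_piece p n k i (m - 1)) (y - \<xi> (m - 1))
   = jump_coeff p n m k i * (y - \<xi> m) ^ k"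
proof (induction k arbitrary: i)
  case 0
  have "\<xi> (m + 1) - \<xi> m \<noteq> 0" "(\<xi> m - \<xi> (m - 1)) / (\<xi> (m - 1) - \<xi> m) = -1"
    using knot_before knot_after by (auto simp: divide_eq_minus_1_iff)
  moreover have "i = m - 1 \<Longrightarrow> i \<noteq> m" "i = m - 1 \<Longrightarrow> i + 1 = m"
    using m_ge_1 by auto
  ultimately show ?case
    by (auto simp: jump_coeff_def knot_prod_except_def)
next
  case (Suc k)
  define w1 where "w1 = (y - \<xi> i) / (\<xi> (i + Suc k) - \<xi> i)"
  define w2 where "w2 = (\<xi> (i + Suc k + 1) - y) / (\<xi> (i + Suc k + 1) - \<xi> (i + 1))"
  have IH: "poly (bspline_piece p n k l m) (y - \<xi> m) =
      poly (bspline_piece p n k l (m - 1)) (y - \<xi> (m - 1)) + jump_coeff p n m k l * (y - \<xi> m) ^ k" for l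
    using Suc.IH[of l] by simp
  have "poly (bspline_piece p n (Suc k) i m) (y - \<xi> m) - poly (bspline_piece p n (Suc k) i (m - 1)) (y - \<xi> (m - 1))
      = w1 * jump_coeff p n m k i * (y - \<xi> m) ^ k + w2 * jump_coeff p n m k (i + 1) * (y - \<xi> m) ^ k"
    unfolding poly_bspline_piece_Suc w1_def[symmetric] w2_def[symmetric] IH by (simp add: algebra_simps)
  also have "\<dots> = (w1 * jump_coeff p n m k i + w2 * jump_coeff p n m k (i + 1)) * (y - \<xi> m) ^ k"
    by (simp add: algebra_simps)
  also have "\<dots> = jump_coeff p n m (Suc k) i * (y - \<xi> m) ^ Suc k"
    unfolding w1_def w2_def jump_coeff_Suc by simp
  finally show ?case .
qed

lemma bspline_across_simple_knot:
  assumes "\<xi> (m - 1) \<le> y" "y < \<xi> (m + 1)"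
  shows "bspline p n k i y = poly (bspline_piece p n k i (m - 1)) (y - \<xi> (m - 1))
    + (if \<xi> m \<le> y then jump_coeff p n m k i * (y - \<xi> m) ^ k else 0)"
proof (cases "\<xi> m \<le> y")
  case True
  then show ?thesis
    using bspline_eq_piece[OF n_ge_1 True assms(2)] poly_bspline_piece_jump[of k i y] by simp
next
  case False
  then show ?thesis
    using bspline_eq_piece[OF n_ge_1 assms(1), of k i] m_ge_1 by simp
qed

end

lemma simple_knot_interior:
  assumes "n \<ge> 1" "1 \<le> q" "q < n"
  shows "simple_knot p n (q + p + 1)"
proof
  have "knot p n (q + p) = real (q - 1) / real n"
    using knot_interior[OF assms(1), of "q - 1" p] assms by simp
  then show "knot p n (q + p + 1 - 1) < knot p n (q + p + 1)"
    using knot_interior[OF assms(1), of q p] assms by (simp add: divide_strict_right_mono)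
  show "knot p n (q + p + 1) < knot p n (q + p + 1 + 1)"
    using knot_interior[OF assms(1), of "q + 1" p] knot_interior[OF assms(1), of q p] assms
    by (simp add: divide_strict_right_mono add.commute add.left_commute)
qed (use assms in auto)

section \<open>Local structure of B-splines on the grid of mesh \<open>1 / (n p)\<close>\<close>

lemma knot_interval_containing:
  assumes n: "n \<ge> 1" and z: "0 \<le> z" "z < 1"
  obtains q where "q < n" "knot p n (q + p + 1) = real q / real n"
    "knot p n (q + p + 2) = real (q + 1) / real n" "real q / real n \<le> z" "z < real (q + 1) / real n"
proof
  define q where "q = nat \<lfloor>z * real n\<rfloor>"
  have "real q = of_int \<lfloor>z * real n\<rfloor>"
    using z by (simp add: q_def)
  then have q: "real q \<le> z * real n" "z * real n < real q + 1"
    by linarith+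
  moreover have "z * real n < real n"
    using z n by simp
  ultimately show "q < n"
    by linarith
  then show "knot p n (q + p + 1) = real q / real n" "knot p n (q + p + 2) = real (q + 1) / real n"
    using knot_interior[OF n, of q p] knot_interior[OF n, of "q + 1" p] by (simp_all add: add.commute add.left_commute)
  show "real q / real n \<le> z" "z < real (q + 1) / real n"
    using q n by (simp_all add: field_simps)
qed

lemma continuous_on_bspline:
  assumes n: "n \<ge> 1" and k: "k \<ge> 1" and c: "c < 1"
  shows "continuous_on {0..c} (bspline p n k i)"
proof (unfold continuous_on_eq_continuous_within, intro ballI)
  fix z assume z: "z \<in> {0..c}"
  obtain q where q: "q < n" "knot p n (q + p + 1) = real q / real n"
    "knot p n (q + p + 2) = real (q + 1) / real n" "real q / real n \<le> z" "z < real (q + 1) / real n"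
    using knot_interval_containing[OF n, of z p] z c by auto
  define m where "m = q + p + 1"
  have m: "knot p n m \<le> z" "z < knot p n (m + 1)"
    using q by (simp_all add: m_def)
  have piece: "continuous (at z within {0..c}) (bspline p n k i)"
    if "0 < \<delta>" "\<And>y. y \<in> {0..c} \<Longrightarrow> dist y z < \<delta> \<Longrightarrow> knot p n m \<le> y \<and> y < knot p n (m + 1)" for \<delta>
  proof (rule continuous_transform_within[OF _ that(1) z])
    show "continuous (at z within {0..c}) (\<lambda>y. poly (bspline_piece p n k i m) (y - knot p n m))"
      by (intro continuous_intros)
    fix y assume "y \<in> {0..c}" "dist y z < \<delta>"
    then show "poly (bspline_piece p n k i m) (y - knot p n m) = bspline p n k i y"
      using that(2) bspline_eq_piece[OF n, symmetric] by blast
  qed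
  consider "q = 0" | "knot p n m < z" | "1 \<le> q" "z = knot p n m"
    using m by linarith
  then show "continuous (at z within {0..c}) (bspline p n k i)"
  proof cases
    case 1
    show ?thesis
      by (rule piece[of "knot p n (m + 1) - z"]) (use 1 q m in \<open>auto simp: m_def dist_real_def\<close>)
  next
    case 2
    show ?thesis
      by (rule piece[of "min (z - knot p n m) (knot p n (m + 1) - z)"]) (use 2 m in \<open>auto simp: dist_real_def\<close>)
  next
    case 3
    interpret simple_knot p n m
      unfolding m_def using simple_knot_interior[OF n 3(1) q(1)] .
    have gap: "knot p n (m - 1) = z - 1 / real n" "knot p n (m + 1) = z + 1 / real n"
      using q 3 knot_interior[OF n, of "q - 1" p] by (simp_all add: m_def diff_divide_distrib add_divide_distrib of_nat_diff)
    show ?thesis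
    proof (rule continuous_transform_within[OF _ _ z])
      show "continuous (at z within {0..c}) (\<lambda>y. poly (bspline_piece p n k i (m - 1)) (y - knot p n (m - 1))
          + jump_coeff p n m k i * max (y - knot p n m) 0 ^ k)"
        by (intro continuous_intros)
      show "0 < 1 / real n" using n by simp
      fix y assume "dist y z < 1 / real n"
      then show "poly (bspline_piece p n k i (m - 1)) (y - knot p n (m - 1))
          + jump_coeff p n m k i * max (y - knot p n m) 0 ^ k = bspline p n k i y"
        using bspline_across_simple_knot[of y k i] gap 3 k by (auto simp: dist_real_def max_def)
    qed
  qed
qed

text \<open>A grid point lies either strictly inside a knot interval, where the B-spline is a single
  polynomial, or on an interior knot, which is simple, so that only the \<open>k\<close>-th derivative jumps.\<close>

lemma bspline_local_form_at_grid_point: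
  assumes n: "n \<ge> 1" and X: "1 \<le> X" "X < n * p" and x: "x = real X / (real n * real p)"
  obtains m d J where "knot p n m < x" "x < d" "d \<le> 1"
    "1 / (real n * real p) \<le> x - knot p n m" "x - knot p n m \<le> 1 / real n"
    "\<And>y. knot p n m \<le> y \<Longrightarrow> y < d \<Longrightarrow> bspline p n k j y =
       poly (bspline_piece p n k j m) (y - knot p n m) + (if x \<le> y then J * (y - x) ^ k else 0)"
proof -
  define q where "q = X div p"
  define \<rho> where "\<rho> = X mod p"
  have "p \<noteq> 0"
    using X by (auto intro: ccontr)
  then have pos: "real n > 0" "real p > 0"
    using n by auto
  have q: "q < n"
    using X by (simp add: q_def less_mult_imp_div_less)
  have \<rho>: "\<rho> < p"
    using pos by (simp add: \<rho>_def)
  have "real X = real q * real p + real \<rho>"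
    unfolding q_def \<rho>_def by (metis div_mult_mod_eq of_nat_add of_nat_mult)
  then have xq: "x = real q / real n + real \<rho> / (real n * real p)"
    using pos by (simp add: x field_simps)
  have knot_q: "knot p n (q + p + 1) = real q / real n" "knot p n (q + p + 2) = real (q + 1) / real n"
    using knot_interior[OF n, of q p] knot_interior[OF n, of "q + 1" p] q
    by (simp_all add: add.commute add.left_commute)
  have d: "real (q + 1) / real n \<le> 1"
    using q pos by simp
  show ?thesis
  proof (cases "\<rho> = 0")
    case False
    then have "1 / (real n * real p) \<le> real \<rho> / (real n * real p)"
      using pos by (intro divide_right_mono) auto
    moreover have "real \<rho> / (real n * real p) < 1 / real n"
      using \<rho> pos by (simp add: field_simps)
    moreover have "0 < real \<rho> / (real n * real p)"
      using False pos by simp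
    ultimately show ?thesis
      using knot_q d bspline_eq_piece[OF n, of p "q + p + 1"]
      by (intro that[of "q + p + 1" "knot p n (q + p + 2)" 0]) (auto simp: xq add_divide_distrib)
  next
    case True
    have q1: "1 \<le> q"
      using X True by (auto simp: q_def \<rho>_def elim: dvdE)
    interpret simple_knot p n "q + p + 1"
      using simple_knot_interior[OF n q1 q] .
    have knot_before_q: "knot p n (q + p) = x - 1 / real n"
      using knot_interior[OF n, of "q - 1" p] q q1 True
      by (simp add: xq diff_divide_distrib of_nat_diff)
    have "1 / (real n * real p) \<le> 1 / real n"
      using pos \<open>p \<noteq> 0\<close> by (intro divide_left_mono) auto
    moreover have "real q / real n < real (q + 1) / real n"
      using pos by (intro divide_strict_right_mono) auto
    ultimately show ?thesis
      using bspline_across_simple_knot[of _ k j] knot_q d True n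
      by (intro that[of "q + p" "knot p n (q + p + 2)" "jump_coeff p n (q + p + 1) k j"])
        (auto simp: knot_before_q xq)
  qed
qed

definition greville_numerator :: "nat \<Rightarrow> nat \<Rightarrow> nat \<Rightarrow> nat" where
  "greville_numerator p n i = (\<Sum>k = i + 1..i + p. knot_index p n k)"

lemma greville_eq_numerator:
  "n \<ge> 1 \<Longrightarrow> p \<ge> 1 \<Longrightarrow> greville p n i = real (greville_numerator p n i) / (real n * real p)"
  unfolding greville_def greville_numerator_def by (simp add: knot_eq_knot_index sum_divide_distrib[symmetric])

lemma greville_numerator_bounds:
  assumes n: "n \<ge> 1" and p: "p \<ge> 2" and i: "2 \<le> i" "i \<le> n + p - 1"
  shows "1 \<le> greville_numerator p n i" "greville_numerator p n i < n * p"
proof -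
  have "knot_index p n (p + 2) \<le> knot_index p n (i + p)"
    using i by (auto simp: knot_index_def)
  moreover have "knot_index p n (i + p) \<le> greville_numerator p n i"
    unfolding greville_numerator_def by (rule member_le_sum) (use p in auto)
  ultimately show "1 \<le> greville_numerator p n i"
    using n by (simp add: knot_index_def)
  have "greville_numerator p n i = knot_index p n (i + 1) + (\<Sum>k = i + 2..i + p. knot_index p n k)"
    unfolding greville_numerator_def using p by (subst sum.atLeast_Suc_atMost) auto
  moreover have "knot_index p n (i + 1) \<le> n - 1"
    using i by (auto simp: knot_index_def)
  moreover have "(\<Sum>k = i + 2..i + p. knot_index p n k) \<le> (p - 1) * n"
    using sum_bounded_above[of "{i + 2..i + p}" "knot_index p n" n] p by (simp add: knot_index_def)
  moreover have "n - 1 + (p - 1) * n < n * p"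
    using n p by (cases p) (auto simp: algebra_simps)
  ultimately show "greville_numerator p n i < n * p"
    by linarith
qed

section \<open>Fractional integrals of a polynomial plus a truncated power\<close>

lemma has_integral_kernel_monomial:
  fixes \<beta> c t :: real
  assumes \<beta>: "-1 < \<beta>" and ct: "c < t"
  shows "((\<lambda>y. (t - y) powr \<beta> * (y - c) ^ r) has_integral
      Beta (real r + 1) (\<beta> + 1) * (t - c) powr (\<beta> + 1 + real r)) {c..t}"
proof -
  define B where "B = Beta (real r + 1) (\<beta> + 1)"
  define f where "f s = s powr real r * (1 - s) powr \<beta>" for s :: real
  define m where "m = 1 / (t - c)"
  have m: "m > 0"
    using ct by (simp add: m_def)
  have "(f has_integral B) (cbox 0 1)"
    unfolding f_def B_def using has_integral_Beta_real[of "real r + 1" "\<beta> + 1"] \<beta> by simp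
  from has_integral_affinity'[OF this m, of "- c / (t - c)"]
  have "((\<lambda>y. f (m *\<^sub>R y + - c / (t - c))) has_integral B /\<^sub>R m ^ DIM(real))
      (cbox ((0 - - c / (t - c)) /\<^sub>R m) ((1 - - c / (t - c)) /\<^sub>R m))" .
  moreover have "(0 - - c / (t - c)) /\<^sub>R m = c" "(1 - - c / (t - c)) /\<^sub>R m = t"
    using ct by (simp_all add: m_def field_simps)
  moreover have "B /\<^sub>R m ^ DIM(real) = B * (t - c)" "m *\<^sub>R y + - c / (t - c) = (y - c) / (t - c)" for y
    by (simp_all add: m_def diff_divide_distrib)
  ultimately have "((\<lambda>y. f ((y - c) / (t - c))) has_integral B * (t - c)) {c..t}"
    by (simp only: cbox_interval)
  then have scaled: "((\<lambda>y. (t - c) powr (\<beta> + real r) * f ((y - c) / (t - c))) has_integral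
      (t - c) powr (\<beta> + real r) * (B * (t - c))) {c..t}"
    by (rule has_integral_mult_right)
  have total: "(t - c) powr (\<beta> + real r) * (B * (t - c)) = B * (t - c) powr (\<beta> + 1 + real r)"
    using ct by (simp add: powr_add algebra_simps)
  have pointwise: "(t - y) powr \<beta> * (y - c) ^ r = (t - c) powr (\<beta> + real r) * f ((y - c) / (t - c))"
    if "y \<in> {c..t} - {c, t}" for y
  proof -
    have y: "c < y" "y < t"
      using that by auto
    have "1 - (y - c) / (t - c) = (t - y) / (t - c)"
      using ct by (simp add: field_simps)
    then have "(t - c) powr (\<beta> + real r) * f ((y - c) / (t - c))
        = (t - c) powr (\<beta> + real r) * ((y - c) powr real r / (t - c) powr real r * ((t - y) powr \<beta> / (t - c) powr \<beta>))"
      using y by (simp add: f_def powr_divide)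
    also have "\<dots> = (t - y) powr \<beta> * (y - c) powr real r"
      using y by (simp add: powr_add field_simps)
    finally show ?thesis
      using y by (simp add: powr_realpow)
  qed
  show ?thesis
    using has_integral_spike_finite[where S = "{c, t}", OF _ pointwise scaled[unfolded total]]
    by (simp add: B_def)
qed

lemma has_real_derivative_truncated_powr:
  fixes x \<gamma> :: real
  assumes \<gamma>: "\<gamma> > 1"
  shows "((\<lambda>t. (max (t - x) 0) powr \<gamma>) has_real_derivative \<gamma> * (max (t - x) 0) powr (\<gamma> - 1)) (at t)"
proof (cases "t = x")
  case False
  show ?thesis
  proof (cases "t > x")
    case True
    have "((\<lambda>t. (t - x) powr \<gamma>) has_real_derivative \<gamma> * (t - x) powr (\<gamma> - 1)) (at t)"
      using True by (auto intro!: derivative_eq_intros)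
    then have "((\<lambda>t. (t - x) powr \<gamma>) has_real_derivative \<gamma> * (max (t - x) 0) powr (\<gamma> - 1)) (at t)"
      using True by simp
    then show ?thesis
      by (rule has_field_derivative_transform_within_open[where S="{x<..}"]) (use True in auto)
  next
    case False
    with \<open>t \<noteq> x\<close> have tx: "t < x" by auto
    have "((\<lambda>t. 0) has_real_derivative 0) (at t)" by simp
    then have "((\<lambda>t. (max (t - x) 0) powr \<gamma>) has_real_derivative 0) (at t)"
      by (rule has_field_derivative_transform_within_open[where S="{..<x}"]) (use tx in auto)
    then show ?thesis using tx by simp
  qed
next
  case True
  have "((\<lambda>y. ((max (y - x) 0) powr \<gamma> - (max (x - x) 0) powr \<gamma>) / (y - x)) \<longlongrightarrow> 0) (at x)"
  proof (rule Lim_null_comparison)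
    show "\<forall>\<^sub>F y in at x. norm (((max (y - x) 0) powr \<gamma> - (max (x - x) 0) powr \<gamma>) / (y - x)) \<le> (max (y - x) 0) powr (\<gamma> - 1)"
    proof (rule always_eventually, rule allI)
      fix y
      show "norm (((max (y - x) 0) powr \<gamma> - (max (x - x) 0) powr \<gamma>) / (y - x)) \<le> (max (y - x) 0) powr (\<gamma> - 1)"
      proof (cases "y > x")
        case True
        have "(y - x) powr \<gamma> = (y - x) powr (\<gamma> - 1) * (y - x)"
          using True by (simp add: powr_diff)
        then show ?thesis using True by simp
      qed simp
    qed
    have "((\<lambda>y. max (y - x) 0) \<longlongrightarrow> 0) (at x)"
      by (rule tendsto_eq_intros refl | simp)+
    then show "((\<lambda>y. (max (y - x) 0) powr (\<gamma> - 1)) \<longlongrightarrow> 0) (at x)"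
      by (rule tendsto_zero_powrI) (use \<gamma> in auto)
  qed
  then show ?thesis using True \<gamma> by (simp add: has_field_derivative_iff)
qed

lemma continuous_on_kernel_mult:
  fixes u :: "real \<Rightarrow> real"
  assumes uc: "continuous_on {0..c} u" and ct: "c < t"
  shows "continuous_on {0..c} (\<lambda>y. (t - y) powr \<delta> * u y)"
proof -
  have "continuous_on {0..c} (\<lambda>y. (t - y) powr \<delta>)"
    by (rule continuous_on_powr') (use ct in \<open>auto intro!: continuous_intros\<close>)
  then show ?thesis using uc by (intro continuous_on_mult) auto
qed

lemma has_real_derivative_kernel_integral:
  fixes u :: "real \<Rightarrow> real"
  assumes u_cont: "continuous_on {0..c} u" and ct: "c < t"
  shows "((\<lambda>s. integral {0..c} (\<lambda>y. (s - y) powr \<delta> * u y)) has_real_derivative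
           \<delta> * integral {0..c} (\<lambda>y. (t - y) powr (\<delta> - 1) * u y)) (at t)"
proof -
  have "((\<lambda>s. integral (cbox 0 c) (\<lambda>y. (s - y) powr \<delta> * u y)) has_field_derivative
          integral (cbox 0 c) (\<lambda>y. \<delta> * (t - y) powr (\<delta> - 1) * u y)) (at t within {c<..})"
  proof (rule leibniz_rule_field_derivative)
    fix s y assume "s \<in> {c<..}" "y \<in> cbox 0 c"
    then have "s - y > 0" by auto
    then show "((\<lambda>s. (s - y) powr \<delta> * u y) has_field_derivative \<delta> * (s - y) powr (\<delta> - 1) * u y)
        (at s within {c<..})"
      by (auto intro!: derivative_eq_intros)
  next
    fix s assume "s \<in> {c<..}"
    then show "(\<lambda>y. (s - y) powr \<delta> * u y) integrable_on cbox 0 c"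
      using continuous_on_kernel_mult[OF u_cont, of s \<delta>] by (auto intro: integrable_continuous_interval)
  next
    have "continuous_on ({c<..} \<times> cbox 0 c) (\<lambda>z. (fst z - snd z) powr (\<delta> - 1))"
      by (rule continuous_on_powr') (auto intro!: continuous_intros)
    moreover have "continuous_on ({c<..} \<times> cbox 0 c) (\<lambda>z. u (snd z))"
      by (rule continuous_on_compose2[OF u_cont continuous_on_snd[OF continuous_on_id]]) auto
    ultimately show "continuous_on ({c<..} \<times> cbox 0 c) (\<lambda>(s, y). \<delta> * (s - y) powr (\<delta> - 1) * u y)"
      by (auto simp: case_prod_beta' intro!: continuous_intros)
  qed (use ct in auto)
  moreover have "at t within {c<..} = at t"
    by (rule at_within_open) (use ct in auto)
  moreover have "(\<lambda>y. (t - y) powr (\<delta> - 1) * u y) integrable_on {0..c}"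
    using continuous_on_kernel_mult[OF u_cont ct] by (auto intro: integrable_continuous_interval)
  ultimately show ?thesis
    by (simp add: mult.assoc)
qed

lemma has_real_derivative_powr_shift:
  assumes "c < t"
  shows "((\<lambda>t. (t - c) powr e) has_real_derivative e * (t - c) powr (e - 1)) (at t)"
  using DERIV_fun_powr[of "\<lambda>t. t - c" 1 t e] assms by (auto intro!: derivative_eq_intros)


lemma has_integral_kernel_truncated_power:
  fixes \<beta> c t x :: real
  assumes \<beta>: "-1 < \<beta>" and k: "k \<ge> 1" and cx: "c < x"
  shows "((\<lambda>y. (t - y) powr \<beta> * (if x \<le> y then (y - x) ^ k else 0)) has_integral
      Beta (real k + 1) (\<beta> + 1) * max (t - x) 0 powr (\<beta> + 1 + real k)) {c..t}"
proof (cases "t \<le> x")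
  case True
  have "((\<lambda>y. 0) has_integral Beta (real k + 1) (\<beta> + 1) * max (t - x) 0 powr (\<beta> + 1 + real k)) {c..t}"
    using True by simp
  then show ?thesis
    by (rule has_integral_eq[rotated]) (use True in auto)
next
  case False
  have "((\<lambda>y. (t - y) powr \<beta> * (if x \<le> y then (y - x) ^ k else 0)) has_integral 0) {c..x}"
    by (rule has_integral_eq[rotated, of "\<lambda>y. 0"]) (use k in auto)
  moreover have "((\<lambda>y. (t - y) powr \<beta> * (if x \<le> y then (y - x) ^ k else 0)) has_integral
      Beta (real k + 1) (\<beta> + 1) * (t - x) powr (\<beta> + 1 + real k)) {x..t}"
    by (rule has_integral_eq[rotated, OF has_integral_kernel_monomial[OF \<beta>]]) (use False in auto)
  ultimately have "((\<lambda>y. (t - y) powr \<beta> * (if x \<le> y then (y - x) ^ k else 0)) has_integral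
      0 + Beta (real k + 1) (\<beta> + 1) * (t - x) powr (\<beta> + 1 + real k)) {c..t}"
    using cx False by (intro has_integral_combine[of c x t]) auto
  then show ?thesis
    using False by simp
qed

lemma poly_eq_sum_coeff_upto:
  fixes q :: "real poly"
  assumes "degree q \<le> N"
  shows "poly q z = (\<Sum>r\<le>N. coeff q r * z ^ r)"
  unfolding poly_altdef by (rule sum.mono_neutral_left) (use assms in \<open>auto simp: coeff_eq_0\<close>)

lemma integral_kernel_split:
  fixes u :: "real \<Rightarrow> real" and q :: "real poly"
  assumes \<beta>: "-1 < \<beta>" and k: "k \<ge> 1" and deg: "degree q \<le> N"
    and c: "0 \<le> c" "c < x" "c < t" "t < d" and u_cont: "continuous_on {0..c} u"
    and u_local: "\<And>y. c \<le> y \<Longrightarrow> y < d \<Longrightarrow> u y = poly q (y - c) + (if x \<le> y then J * (y - x) ^ k else 0)"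
  shows "integral {0..t} (\<lambda>y. (t - y) powr \<beta> * u y) =
     integral {0..c} (\<lambda>y. (t - y) powr \<beta> * u y)
     + (\<Sum>r\<le>N. coeff q r * (Beta (real r + 1) (\<beta> + 1) * (t - c) powr (\<beta> + 1 + real r)))
     + J * (Beta (real k + 1) (\<beta> + 1) * max (t - x) 0 powr (\<beta> + 1 + real k))"
proof -
  let ?f = "\<lambda>y. (t - y) powr \<beta> * u y"
  have "(?f has_integral integral {0..c} ?f) {0..c}"
    using continuous_on_kernel_mult[OF u_cont c(3), of \<beta>] by (auto intro: integrable_continuous_interval)
  moreover have "(?f has_integral
      (\<Sum>r\<le>N. coeff q r * (Beta (real r + 1) (\<beta> + 1) * (t - c) powr (\<beta> + 1 + real r)))
      + J * (Beta (real k + 1) (\<beta> + 1) * max (t - x) 0 powr (\<beta> + 1 + real k))) {c..t}"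
  proof (rule has_integral_eq[rotated])
    show "((\<lambda>y. (\<Sum>r\<le>N. coeff q r * ((t - y) powr \<beta> * (y - c) ^ r))
        + J * ((t - y) powr \<beta> * (if x \<le> y then (y - x) ^ k else 0))) has_integral
      (\<Sum>r\<le>N. coeff q r * (Beta (real r + 1) (\<beta> + 1) * (t - c) powr (\<beta> + 1 + real r)))
      + J * (Beta (real k + 1) (\<beta> + 1) * max (t - x) 0 powr (\<beta> + 1 + real k))) {c..t}"
      by (intro has_integral_add has_integral_sum has_integral_mult_right
          has_integral_kernel_monomial has_integral_kernel_truncated_power \<beta> k c) simp
    fix y assume "y \<in> {c..t}"
    then have "u y = (\<Sum>r\<le>N. coeff q r * (y - c) ^ r) + (if x \<le> y then J * (y - x) ^ k else 0)"
      using u_local[of y] c poly_eq_sum_coeff_upto[OF deg] by simp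
    then show "(\<Sum>r\<le>N. coeff q r * ((t - y) powr \<beta> * (y - c) ^ r))
        + J * ((t - y) powr \<beta> * (if x \<le> y then (y - x) ^ k else 0)) = ?f y"
      by (simp add: sum_distrib_left distrib_left mult_ac)
  qed
  ultimately have "(?f has_integral integral {0..c} ?f
      + ((\<Sum>r\<le>N. coeff q r * (Beta (real r + 1) (\<beta> + 1) * (t - c) powr (\<beta> + 1 + real r)))
      + J * (Beta (real k + 1) (\<beta> + 1) * max (t - x) 0 powr (\<beta> + 1 + real k)))) {0..t}"
    by (rule has_integral_combine[OF c(1) less_imp_le[OF c(3)]])
  then show ?thesis
    by (simp add: integral_unique add.assoc)
qed

text \<open>Near \<open>x\<close> the integral splits into an integral over \<open>[0, c]\<close>, which may be
  differentiated under the integral sign, and Beta integrals, which are explicit powers of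
  \<open>t - c\<close> and \<open>(t - x)\<^sub>+\<close>; the latter has vanishing second derivative at \<open>x\<close> because \<open>k \<ge> 2\<close>.\<close>

lemma deriv2_kernel_integral:
  fixes u :: "real \<Rightarrow> real" and q :: "real poly"
  assumes \<beta>: "-1 < \<beta>" and k: "2 \<le> k" and deg: "degree q \<le> N"
    and c: "0 \<le> c" "c < x" "x < d" and u_cont: "continuous_on {0..c} u"
    and u_local: "\<And>y. c \<le> y \<Longrightarrow> y < d \<Longrightarrow> u y = poly q (y - c) + (if x \<le> y then J * (y - x) ^ k else 0)"
  shows "deriv (deriv (\<lambda>t. integral {0..t} (\<lambda>y. (t - y) powr \<beta> * u y))) x
   = \<beta> * (\<beta> - 1) * integral {0..c} (\<lambda>y. (x - y) powr (\<beta> - 2) * u y)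
     + (\<Sum>r\<le>N. coeff q r * Beta (real r + 1) (\<beta> + 1) * (\<beta> + 1 + real r) * (\<beta> + real r)
          * (x - c) powr (\<beta> + real r - 1))"
proof -
  define F where "F = (\<lambda>t. integral {0..t} (\<lambda>y. (t - y) powr \<beta> * u y))"
  define A where "A = (\<lambda>\<delta> t. integral {0..c} (\<lambda>y. (t - y) powr \<delta> * u y))"
  define \<gamma> where "\<gamma> = \<beta> + 1 + real k"
  define e where "e = (\<lambda>r::nat. \<beta> + 1 + real r)"
  define K where "K = (\<lambda>r::nat. Beta (real r + 1) (\<beta> + 1))"
  define F1 where "F1 = (\<lambda>t. \<beta> * A (\<beta> - 1) t + (\<Sum>r\<le>N. coeff q r * (K r * (e r * (t - c) powr (e r - 1))))
      + J * (K k * (\<gamma> * max (t - x) 0 powr (\<gamma> - 1))))"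
  define F2 where "F2 = \<beta> * ((\<beta> - 1) * A (\<beta> - 1 - 1) x)
      + (\<Sum>r\<le>N. coeff q r * (K r * (e r * ((e r - 1) * (x - c) powr (e r - 1 - 1)))))
      + J * (K k * (\<gamma> * ((\<gamma> - 1) * max (x - x) 0 powr (\<gamma> - 1 - 1))))"
  have \<gamma>: "\<gamma> > 1" "\<gamma> - 1 > 1" using \<beta> k by (auto simp: \<gamma>_def)
  have O: "open {c<..<d}" "x \<in> {c<..<d}" using c by auto
  have dF: "(F has_real_derivative F1 t) (at t)" if t: "t \<in> {c<..<d}" for t
  proof -
    have ct: "c < t" using t by auto
    have "((\<lambda>s. A \<beta> s + (\<Sum>r\<le>N. coeff q r * (K r * (s - c) powr e r)) + J * (K k * max (s - x) 0 powr \<gamma>))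
        has_real_derivative F1 t) (at t)"
      unfolding F1_def A_def
      by (intro DERIV_add has_real_derivative_kernel_integral[OF u_cont ct] DERIV_sum DERIV_cmult
          has_real_derivative_powr_shift[OF ct] has_real_derivative_truncated_powr \<gamma>)
    then show ?thesis
      by (rule has_field_derivative_transform_within_open[OF _ O(1) t])
        (use integral_kernel_split[OF \<beta> _ deg c(1,2) _ _ u_cont u_local] k
         in \<open>auto simp: F_def A_def K_def e_def \<gamma>_def\<close>)
  qed
  have "(F1 has_real_derivative F2) (at x)"
    unfolding F1_def F2_def A_def
    by (intro DERIV_add has_real_derivative_kernel_integral[OF u_cont c(2)] DERIV_sum DERIV_cmult
        has_real_derivative_powr_shift[OF c(2)] has_real_derivative_truncated_powr \<gamma>)
  then have "(deriv F has_real_derivative F2) (at x)"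
    by (rule has_field_derivative_transform_within_open[OF _ O]) (use dF DERIV_imp_deriv in metis)
  then have "deriv (deriv F) x = F2"
    by (rule DERIV_imp_deriv)
  also have "F2 = \<beta> * (\<beta> - 1) * integral {0..c} (\<lambda>y. (x - y) powr (\<beta> - 2) * u y)
     + (\<Sum>r\<le>N. coeff q r * Beta (real r + 1) (\<beta> + 1) * (\<beta> + 1 + real r) * (\<beta> + real r)
          * (x - c) powr (\<beta> + real r - 1))"
    unfolding F2_def A_def K_def e_def using \<gamma>
    by (simp add: algebra_simps diff_diff_eq)
  finally show ?thesis unfolding F_def .
qed

section \<open>Estimates for the singular kernel\<close>

lemma has_integral_singular_kernel:
  fixes \<beta> c x :: real
  assumes c0: "0 \<le> c" and cx: "c < x" and \<beta>: "\<beta> < 1"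
  shows "((\<lambda>y. (x - y) powr (\<beta> - 2)) has_integral ((x - c) powr (\<beta> - 1) - (x - 0) powr (\<beta> - 1)) / (1 - \<beta>)) {0..c}"
proof -
  let ?f = "\<lambda>y. (x - y) powr (\<beta> - 1) / (1 - \<beta>)"
  have "(?f has_vector_derivative (x - y) powr (\<beta> - 2)) (at y within {0..c})" if y: "y \<in> {0..c}" for y
  proof -
    have xy: "x - y > 0" using y cx by auto
    have "((\<lambda>y. (x - y) powr (\<beta> - 1)) has_real_derivative (\<beta> - 1) * (x - y) powr (\<beta> - 1 - of_nat 1) * (-1)) (at y)"
      by (rule DERIV_fun_powr) (use xy in \<open>auto intro!: derivative_eq_intros\<close>)
    from DERIV_cdivide[OF this, of "1 - \<beta>"]
    have "(?f has_real_derivative ((\<beta> - 1) * (x - y) powr (\<beta> - 1 - of_nat 1) * (-1)) / (1 - \<beta>)) (at y)" .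
    moreover have "((\<beta> - 1) * (x - y) powr (\<beta> - 1 - of_nat 1) * (-1)) / (1 - \<beta>) = (x - y) powr (\<beta> - 2)"
    proof -
      have "(\<beta> - 1) * (x - y) powr (\<beta> - 1 - of_nat 1) * (-1) = (1 - \<beta>) * (x - y) powr (\<beta> - 2)" by (simp add: algebra_simps)
      then show ?thesis using \<beta> by simp
    qed
    ultimately have "(?f has_real_derivative (x - y) powr (\<beta> - 2)) (at y)" by simp
    then show ?thesis
      by (simp add: has_real_derivative_iff_has_vector_derivative[symmetric] has_field_derivative_at_within)
  qed
  from fundamental_theorem_of_calculus[OF c0 this]
  show ?thesis by (simp add: diff_divide_distrib)
qed

lemma abs_integral_singular_kernel_le:
  fixes u :: "real \<Rightarrow> real"
  assumes c0: "0 \<le> c" and cx: "c < x" and \<beta>: "\<beta> < 1"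
    and uc: "continuous_on {0..c} u" and uM: "\<And>y. y \<in> {0..c} \<Longrightarrow> \<bar>u y\<bar> \<le> M"
  shows "\<bar>integral {0..c} (\<lambda>y. (x - y) powr (\<beta> - 2) * u y)\<bar> \<le> M * ((x - c) powr (\<beta> - 1) / (1 - \<beta>))"
proof -
  have KI: "((\<lambda>y. (x - y) powr (\<beta> - 2)) has_integral ((x - c) powr (\<beta> - 1) - (x - 0) powr (\<beta> - 1)) / (1 - \<beta>)) {0..c}"
    by (rule has_integral_singular_kernel[OF c0 cx \<beta>])
  have f_int: "(\<lambda>y. (x - y) powr (\<beta> - 2) * u y) integrable_on {0..c}"
    using continuous_on_kernel_mult[OF uc cx, of "\<beta> - 2"] by (auto intro: integrable_continuous_interval)
  have majorant: "((\<lambda>y. M * (x - y) powr (\<beta> - 2)) has_integral M * (((x - c) powr (\<beta> - 1) - (x - 0) powr (\<beta> - 1)) / (1 - \<beta>))) {0..c}"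
    by (rule has_integral_mult_right[OF KI])
  have "norm (integral {0..c} (\<lambda>y. (x - y) powr (\<beta> - 2) * u y)) \<le> integral {0..c} (\<lambda>y. M * (x - y) powr (\<beta> - 2))"
  proof (rule integral_norm_bound_integral[OF f_int])
    show "(\<lambda>y. M * (x - y) powr (\<beta> - 2)) integrable_on {0..c}" using majorant by blast
    fix y assume y: "y \<in> {0..c}"
    have "\<bar>(x - y) powr (\<beta> - 2) * u y\<bar> = (x - y) powr (\<beta> - 2) * \<bar>u y\<bar>" by (simp add: abs_mult)
    also have "\<dots> \<le> (x - y) powr (\<beta> - 2) * M" by (rule mult_left_mono[OF uM[OF y]]) simp
    finally show "norm ((x - y) powr (\<beta> - 2) * u y) \<le> M * (x - y) powr (\<beta> - 2)" by (simp add: mult.commute)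
  qed
  also have "\<dots> = M * (((x - c) powr (\<beta> - 1) - (x - 0) powr (\<beta> - 1)) / (1 - \<beta>))" using majorant by (rule integral_unique)
  also have "\<dots> \<le> M * ((x - c) powr (\<beta> - 1) / (1 - \<beta>))"
  proof -
    have M0: "0 \<le> M" using uM[of 0] c0 by simp
    have "((x - c) powr (\<beta> - 1) - (x - 0) powr (\<beta> - 1)) / (1 - \<beta>) \<le> (x - c) powr (\<beta> - 1) / (1 - \<beta>)"
      using \<beta> by (intro divide_right_mono) auto
    then show ?thesis using M0 by (rule mult_left_mono)
  qed
  finally show ?thesis by simp
qed

lemma abs_integral_singular_kernel_le_support:
  fixes u :: "real \<Rightarrow> real"
  assumes a0: "0 \<le> a" and ab: "a \<le> b" and bx: "b < x" and \<beta>: "\<beta> < 2"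
    and uc: "continuous_on {0..b} u" and uM: "\<And>y. y \<in> {a..b} \<Longrightarrow> \<bar>u y\<bar> \<le> M" and u0: "\<And>y. y < a \<Longrightarrow> u y = 0"
  shows "\<bar>integral {0..b} (\<lambda>y. (x - y) powr (\<beta> - 2) * u y)\<bar> \<le> M * (x - b) powr (\<beta> - 2) * (b - a)"
proof -
  let ?f = "\<lambda>y. (x - y) powr (\<beta> - 2) * u y"
  have f_int: "?f integrable_on {0..b}"
    using continuous_on_kernel_mult[OF uc bx, of "\<beta> - 2"] by (auto intro: integrable_continuous_interval)
  have fa: "?f integrable_on {a..b}" by (rule integrable_on_subinterval[OF f_int]) (use a0 in auto)
  have z: "(?f has_integral 0) {0..a}"
  proof (rule has_integral_spike_finite[where S="{a}" and f="\<lambda>y. 0"])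
    fix y assume "y \<in> {0..a} - {a}" then show "?f y = 0" using u0 by auto
  qed auto
  have "integral {0..b} ?f = integral {0..a} ?f + integral {a..b} ?f"
    by (rule Henstock_Kurzweil_Integration.integral_combine[OF a0 ab f_int, symmetric])
  also have "integral {0..a} ?f = 0" using z by (rule integral_unique)
  finally have e: "integral {0..b} ?f = integral {a..b} ?f" by simp
  have "norm (integral {a..b} ?f) \<le> integral {a..b} (\<lambda>y. M * (x - b) powr (\<beta> - 2))"
  proof (rule integral_norm_bound_integral[OF fa])
    show "(\<lambda>y. M * (x - b) powr (\<beta> - 2)) integrable_on {a..b}" by (rule integrable_const_ivl)
    fix y assume y: "y \<in> {a..b}"
    have "\<bar>?f y\<bar> = (x - y) powr (\<beta> - 2) * \<bar>u y\<bar>" by (simp add: abs_mult)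
    also have "\<dots> \<le> (x - b) powr (\<beta> - 2) * M"
    proof (rule mult_mono[OF _ uM[OF y]])
      show "(x - y) powr (\<beta> - 2) \<le> (x - b) powr (\<beta> - 2)" by (rule powr_mono2') (use y bx \<beta> in auto)
    qed auto
    finally show "norm (?f y) \<le> M * (x - b) powr (\<beta> - 2)" by (simp add: mult.commute)
  qed
  also have "\<dots> = M * (x - b) powr (\<beta> - 2) * (b - a)" using ab by simp
  finally show ?thesis unfolding e by simp
qed

lemma powr_le_if_between_inverses:
  fixes h N P \<alpha> :: real
  assumes N: "N \<ge> 1" and P: "P \<ge> 1" and a: "0 < \<alpha>"
    and h1: "1 / (N * P) \<le> h" and h2: "h \<le> 1 / N"
  shows "h powr (real r - \<alpha>) \<le> P powr \<alpha> * N powr (\<alpha> - real r)"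
proof -
  have NP: "0 < N * P" using N P by simp
  have hp: "0 < h" using h1 NP by (smt (verit) divide_pos_pos)
  show ?thesis
  proof (cases "0 \<le> real r - \<alpha>")
    case True
    have "h powr (real r - \<alpha>) \<le> (1 / N) powr (real r - \<alpha>)" by (rule powr_mono2[OF True]) (use hp h2 in auto)
    also have "\<dots> = N powr (\<alpha> - real r)" using N by (simp add: powr_divide powr_minus_divide[symmetric] powr_minus)
    also have "\<dots> \<le> P powr \<alpha> * N powr (\<alpha> - real r)"
    proof -
      have "1 \<le> P powr \<alpha>" using P a by (simp add: ge_one_powr_ge_zero)
      then show ?thesis using N by (simp add: mult_le_cancel_right1)
    qed
    finally show ?thesis .
  next
    case False
    have "h powr (real r - \<alpha>) \<le> (1 / (N * P)) powr (real r - \<alpha>)" by (rule powr_mono2') (use False hp h1 NP in auto)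
    also have "\<dots> = (N * P) powr (\<alpha> - real r)"
    proof -
      have "(1 / (N * P)) powr (real r - \<alpha>) = 1 / (N * P) powr (real r - \<alpha>)" using NP by (simp add: powr_divide)
      also have "\<dots> = (N * P) powr (- (real r - \<alpha>))" by (rule powr_minus_divide[symmetric])
      finally show ?thesis by simp
    qed
    also have "\<dots> = N powr (\<alpha> - real r) * P powr (\<alpha> - real r)" using N P by (simp add: powr_mult)
    also have "\<dots> \<le> N powr (\<alpha> - real r) * P powr \<alpha>"
      by (rule mult_left_mono) (use P in \<open>auto intro: powr_mono\<close>)
    finally show ?thesis by (simp add: mult.commute)
  qed
qed

lemma abs_coeff_bspline_piece_mult_powr_le:
  assumes n: "n \<ge> 1" and p: "p \<ge> 1" and \<alpha>: "0 < \<alpha>"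
    and h: "1 / (real n * real p) \<le> h" "h \<le> 1 / real n"
  shows "\<bar>coeff (bspline_piece p n k j m) r * K * h powr (real r - \<alpha>)\<bar>
    \<le> odd_double_factorial k * \<bar>K\<bar> * real p powr \<alpha> * real n powr \<alpha>"
proof -
  have N: "real n \<ge> 1" "real p \<ge> 1"
    using n p by auto
  have "\<bar>coeff (bspline_piece p n k j m) r * K * h powr (real r - \<alpha>)\<bar>
      = \<bar>coeff (bspline_piece p n k j m) r\<bar> * \<bar>K\<bar> * h powr (real r - \<alpha>)"
    by (simp add: abs_mult)
  also have "\<dots> \<le> (odd_double_factorial k * real n ^ r) * \<bar>K\<bar> * (real p powr \<alpha> * real n powr (\<alpha> - real r))"
    using abs_coeff_bspline_piece_le[OF n] powr_le_if_between_inverses[OF N \<alpha> h] odd_double_factorial_ge_one[of k]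
    by (intro mult_mono) auto
  also have "real n ^ r * real n powr (\<alpha> - real r) = real n powr \<alpha>"
    using N by (simp add: powr_realpow[symmetric] powr_add[symmetric])
  then have "(odd_double_factorial k * real n ^ r) * \<bar>K\<bar> * (real p powr \<alpha> * real n powr (\<alpha> - real r))
      = odd_double_factorial k * \<bar>K\<bar> * real p powr \<alpha> * real n powr \<alpha>"
    by (simp add: mult_ac)
  finally show ?thesis .
qed

section \<open>The Riemann--Liouville derivative of a B-spline at a Greville abscissa\<close>

lemma greville_less_one:
  assumes n: "n \<ge> 1" and p: "p \<ge> 2" and i: "2 \<le> i" "i \<le> n + p - 1"
  shows "greville p n i < 1"
proof -
  have "real (greville_numerator p n i) < real n * real p"
    using greville_numerator_bounds(2)[OF n p i] by (simp flip: of_nat_mult)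
  then show ?thesis
    using greville_eq_numerator[OF n] n p by (simp add: divide_less_eq)
qed

lemma deriv2_kernel_integral_bspline_at_greville:
  assumes n: "n \<ge> 1" and p: "p \<ge> 2" and i: "2 \<le> i" "i \<le> n + p - 1" and \<beta>: "-1 < \<beta>"
  obtains m where "knot p n m < greville p n i" "greville p n i < 1"
    "1 / (real n * real p) \<le> greville p n i - knot p n m" "greville p n i - knot p n m \<le> 1 / real n"
    "deriv (deriv (\<lambda>t. integral {0..t} (\<lambda>y. (t - y) powr \<beta> * bspline p n p j y))) (greville p n i)
     = \<beta> * (\<beta> - 1) * integral {0..knot p n m} (\<lambda>y. (greville p n i - y) powr (\<beta> - 2) * bspline p n p j y)
     + (\<Sum>r\<le>p. coeff (bspline_piece p n p j m) r * Beta (real r + 1) (\<beta> + 1) * (\<beta> + 1 + real r)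
          * (\<beta> + real r) * (greville p n i - knot p n m) powr (\<beta> + real r - 1))"
proof -
  define x where "x = greville p n i"
  have X: "1 \<le> greville_numerator p n i" "greville_numerator p n i < n * p"
    using greville_numerator_bounds[OF n p i] by auto
  have x_eq: "x = real (greville_numerator p n i) / (real n * real p)"
    unfolding x_def using greville_eq_numerator[OF n] p by simp
  have x1: "x < 1"
    unfolding x_def using greville_less_one[OF n p i] .
  obtain m d J where local: "knot p n m < x" "x < d" "d \<le> 1"
      "1 / (real n * real p) \<le> x - knot p n m" "x - knot p n m \<le> 1 / real n"
      "\<And>y. knot p n m \<le> y \<Longrightarrow> y < d \<Longrightarrow> bspline p n p j y =
         poly (bspline_piece p n p j m) (y - knot p n m) + (if x \<le> y then J * (y - x) ^ p else 0)"
    using bspline_local_form_at_grid_point[OF n X x_eq] by blast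
  have "continuous_on {0..knot p n m} (bspline p n p j)"
    by (rule continuous_on_bspline[OF n]) (use p local x1 in auto)
  from deriv2_kernel_integral[OF \<beta> p degree_bspline_piece knot_nonneg[OF n] local(1,2) this local(6)]
  show ?thesis
    using that local x1 by (simp add: x_def)
qed

lemma RL_left_bspline_eq_0:
  assumes \<alpha>: "\<alpha> < 2" and n: "n \<ge> 1" and p: "p \<ge> 2" and i: "i \<in> {2..n + p - 1}"
    and before: "greville p n i \<le> knot p n j"
  shows "RL_left \<alpha> (bspline p n p j) (greville p n i) = 0"
proof -
  obtain m where m: "knot p n m < greville p n i"
    "deriv (deriv (\<lambda>t. integral {0..t} (\<lambda>y. (t - y) powr (1 - \<alpha>) * bspline p n p j y))) (greville p n i)
     = (1 - \<alpha>) * (1 - \<alpha> - 1) * integral {0..knot p n m}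
         (\<lambda>y. (greville p n i - y) powr (1 - \<alpha> - 2) * bspline p n p j y)
     + (\<Sum>r\<le>p. coeff (bspline_piece p n p j m) r * Beta (real r + 1) (1 - \<alpha> + 1) * (1 - \<alpha> + 1 + real r)
          * (1 - \<alpha> + real r) * (greville p n i - knot p n m) powr (1 - \<alpha> + real r - 1))"
    using deriv2_kernel_integral_bspline_at_greville[OF n p _ _ _, of i "1 - \<alpha>" j] i \<alpha> by auto
  have "m < j"
    using m(1) before knot_mono[OF n, of j m p] by (meson leD leI order.trans)
  then have "bspline_piece p n p j m = 0"
    by (simp add: bspline_piece_eq_0)
  moreover have "bspline p n p j y = 0" if "y \<in> {0..knot p n m}" for y
    using bspline_nonzero_imp_support[OF n, of p p j y] that m(1) before by fastforce
  then have "integral {0..knot p n m} (\<lambda>y. (greville p n i - y) powr (1 - \<alpha> - 2) * bspline p n p j y)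
      = integral {0..knot p n m} (\<lambda>y. 0)"
    by (intro integral_cong) simp
  ultimately show ?thesis
    unfolding RL_left_def m(2) by simp
qed

lemma abs_RL_left_bspline_le_near:
  assumes \<alpha>: "0 < \<alpha>" "\<alpha> < 2" and p: "p \<ge> 2"
  obtains C where "\<And>n i j. n \<ge> 1 \<Longrightarrow> i \<in> {2..n + p - 1} \<Longrightarrow>
    \<bar>RL_left \<alpha> (bspline p n p j) (greville p n i)\<bar> \<le> C * real n powr \<alpha>"
proof
  define \<beta> where "\<beta> = 1 - \<alpha>"
  have \<beta>: "-1 < \<beta>" "\<beta> < 1" "\<beta> - 1 = - \<alpha>"
    using \<alpha> by (auto simp: \<beta>_def)
  define L where "L r = \<bar>Beta (real r + 1) (\<beta> + 1) * (\<beta> + 1 + real r) * (\<beta> + real r)\<bar>" for r :: nat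
  define C where "C = \<bar>1 / Gamma (2 - \<alpha>)\<bar> * real p powr \<alpha>
    * (\<bar>\<beta> * (\<beta> - 1)\<bar> / (1 - \<beta>) * 2 ^ p + (\<Sum>r\<le>p. odd_double_factorial p * L r))"
  fix n i j assume n: "n \<ge> 1" and i: "i \<in> {2..n + p - 1}"
  define x where "x = greville p n i"
  obtain m where m: "knot p n m < x" "x < 1"
    "1 / (real n * real p) \<le> x - knot p n m" "x - knot p n m \<le> 1 / real n"
    "deriv (deriv (\<lambda>t. integral {0..t} (\<lambda>y. (t - y) powr \<beta> * bspline p n p j y))) x
     = \<beta> * (\<beta> - 1) * integral {0..knot p n m} (\<lambda>y. (x - y) powr (\<beta> - 2) * bspline p n p j y)
     + (\<Sum>r\<le>p. coeff (bspline_piece p n p j m) r * Beta (real r + 1) (\<beta> + 1) * (\<beta> + 1 + real r)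
          * (\<beta> + real r) * (x - knot p n m) powr (\<beta> + real r - 1))"
    using deriv2_kernel_integral_bspline_at_greville[OF n p _ _ \<beta>(1), of i j] i unfolding x_def by auto
  define h where "h = x - knot p n m"
  have h_powr: "h powr (\<beta> - 1) \<le> real p powr \<alpha> * real n powr \<alpha>"
    using powr_le_if_between_inverses[of "real n" "real p" \<alpha> h 0] n p \<alpha>(1) m(3,4) \<beta>(3)
    by (simp add: h_def)
  have "\<bar>integral {0..knot p n m} (\<lambda>y. (x - y) powr (\<beta> - 2) * bspline p n p j y)\<bar>
      \<le> 2 ^ p * (h powr (\<beta> - 1) / (1 - \<beta>))"
    unfolding h_def
    by (rule abs_integral_singular_kernel_le[OF knot_nonneg[OF n] m(1) \<beta>(2) continuous_on_bspline
          abs_bspline_le[OF n]]) (use n p m(1,2) in auto)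
  also have "\<dots> \<le> 2 ^ p * (real p powr \<alpha> * real n powr \<alpha> / (1 - \<beta>))"
    using h_powr \<beta> by (intro mult_left_mono divide_right_mono) auto
  finally have first: "\<bar>\<beta> * (\<beta> - 1) * integral {0..knot p n m} (\<lambda>y. (x - y) powr (\<beta> - 2) * bspline p n p j y)\<bar>
      \<le> \<bar>\<beta> * (\<beta> - 1)\<bar> / (1 - \<beta>) * 2 ^ p * real p powr \<alpha> * real n powr \<alpha>"
    unfolding abs_mult[of "\<beta> * (\<beta> - 1)"] by (auto simp: field_simps elim!: order.trans[OF mult_left_mono])
  have summand: "\<bar>coeff (bspline_piece p n p j m) r * Beta (real r + 1) (\<beta> + 1) * (\<beta> + 1 + real r) * (\<beta> + real r)
      * h powr (\<beta> + real r - 1)\<bar> \<le> odd_double_factorial p * L r * real p powr \<alpha> * real n powr \<alpha>" for r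
    using abs_coeff_bspline_piece_mult_powr_le[OF n _ \<alpha>(1) m(3,4)[folded h_def], where k = p and r = r
        and K = "Beta (real r + 1) (\<beta> + 1) * (\<beta> + 1 + real r) * (\<beta> + real r)"] p
    by (simp add: L_def \<beta>_def mult.assoc)
  have "\<bar>RL_left \<alpha> (bspline p n p j) x\<bar> = \<bar>1 / Gamma (2 - \<alpha>)\<bar>
      * \<bar>deriv (deriv (\<lambda>t. integral {0..t} (\<lambda>y. (t - y) powr \<beta> * bspline p n p j y))) x\<bar>"
    by (simp add: RL_left_def \<beta>_def abs_mult)
  also have "\<dots> \<le> \<bar>1 / Gamma (2 - \<alpha>)\<bar> * (\<bar>\<beta> * (\<beta> - 1)\<bar> / (1 - \<beta>) * 2 ^ p * real p powr \<alpha> * real n powr \<alpha>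
      + (\<Sum>r\<le>p. odd_double_factorial p * L r * real p powr \<alpha> * real n powr \<alpha>))"
    unfolding m(5) h_def[symmetric]
    by (intro mult_left_mono order.trans[OF abs_triangle_ineq] add_mono first
        order.trans[OF sum_abs] sum_mono summand) simp_all
  also have "\<dots> = C * real n powr \<alpha>"
    unfolding C_def sum_distrib_right[symmetric] by (simp add: algebra_simps)
  finally show "\<bar>RL_left \<alpha> (bspline p n p j) (greville p n i)\<bar> \<le> C * real n powr \<alpha>"
    by (simp add: x_def)
qed

lemma abs_deriv2_kernel_integral_le_off_support:
  fixes u :: "real \<Rightarrow> real"
  assumes \<beta>: "-1 < \<beta>" "\<beta> < 2" and ab: "0 \<le> a" "a \<le> b" "b < x"
    and u_cont: "continuous_on {0..b} u" and u_bound: "\<And>y. y \<in> {a..b} \<Longrightarrow> \<bar>u y\<bar> \<le> M"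
    and u_vanish: "\<And>y. y < a \<or> b \<le> y \<Longrightarrow> u y = 0"
  shows "\<bar>deriv (deriv (\<lambda>t. integral {0..t} (\<lambda>y. (t - y) powr \<beta> * u y))) x\<bar>
    \<le> \<bar>\<beta> * (\<beta> - 1)\<bar> * (M * (x - b) powr (\<beta> - 2) * (b - a))"
proof -
  have "deriv (deriv (\<lambda>t. integral {0..t} (\<lambda>y. (t - y) powr \<beta> * u y))) x
      = \<beta> * (\<beta> - 1) * integral {0..b} (\<lambda>y. (x - y) powr (\<beta> - 2) * u y)
        + (\<Sum>r\<le>0. coeff 0 r * Beta (real r + 1) (\<beta> + 1) * (\<beta> + 1 + real r) * (\<beta> + real r)
          * (x - b) powr (\<beta> + real r - 1))"
  proof (rule deriv2_kernel_integral[OF \<beta>(1) _ _ _ ab(3) less_add_one u_cont, where k = 2 and J = 0])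
    fix y assume "b \<le> y"
    then show "u y = poly 0 (y - b) + (if x \<le> y then 0 * (y - x) ^ 2 else 0)"
      using u_vanish by simp
  qed (use ab in auto)
  then show ?thesis
    using abs_integral_singular_kernel_le_support[OF ab \<beta>(2) u_cont u_bound u_vanish]
    by (simp add: abs_mult mult_left_mono)
qed

lemma abs_RL_left_bspline_le_far:
  assumes \<alpha>: "-1 < \<alpha>" "\<alpha> < 2" and p: "p \<ge> 2"
  obtains C where "\<And>n i j. n \<ge> 1 \<Longrightarrow> i \<in> {2..n + p - 1} \<Longrightarrow>
    knot p n (j + p + 1) + 1 / real n < greville p n i \<Longrightarrow>
    \<bar>RL_left \<alpha> (bspline p n p j) (greville p n i)\<bar> \<le> C * (greville p n i - knot p n (j + p + 1)) powr (- \<alpha>)"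
proof
  define \<beta> where "\<beta> = 1 - \<alpha>"
  have \<beta>: "-1 < \<beta>" "\<beta> < 2"
    using \<alpha> by (auto simp: \<beta>_def)
  define C where "C = \<bar>1 / Gamma (2 - \<alpha>)\<bar> * \<bar>\<beta> * (\<beta> - 1)\<bar> * 2 ^ p * (real p + 1)"
  fix n i j assume n: "n \<ge> 1" and i: "i \<in> {2..n + p - 1}"
    and far: "knot p n (j + p + 1) + 1 / real n < greville p n i"
  define x where "x = greville p n i"
  define a where "a = knot p n j"
  define b where "b = knot p n (j + p + 1)"
  have ab: "0 \<le> a" "a \<le> b"
    unfolding a_def b_def by (simp_all add: knot_nonneg[OF n] knot_mono[OF n])
  have "0 < 1 / real n" "x < 1"
    using n greville_less_one[OF n p] i by (simp_all add: x_def)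
  then have bx: "b < x" "b < 1"
    using far unfolding x_def b_def by linarith+
  have "b - a \<le> (real p + 1) * (1 / real n)"
    using knot_diff_le[OF n, of j "j + p + 1" p] by (simp add: a_def b_def add.commute)
  also have "\<dots> \<le> (real p + 1) * (x - b)"
    using far by (intro mult_left_mono) (simp_all add: x_def b_def)
  finally have ba: "b - a \<le> (real p + 1) * (x - b)" .
  have u_cont: "continuous_on {0..b} (bspline p n p j)"
    using continuous_on_bspline[OF n _ bx(2)] p by simp
  have vanish: "bspline p n p j y = 0" if "y < a \<or> b \<le> y" for y
    using bspline_nonzero_imp_support[OF n, of p p j y] that by (force simp: a_def b_def)
  have "\<bar>RL_left \<alpha> (bspline p n p j) x\<bar> \<le> \<bar>1 / Gamma (2 - \<alpha>)\<bar>
      * (\<bar>\<beta> * (\<beta> - 1)\<bar> * (2 ^ p * (x - b) powr (\<beta> - 2) * (b - a)))"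
    unfolding RL_left_def abs_mult[of "1 / Gamma (2 - \<alpha>)"] \<beta>_def[symmetric]
    by (intro mult_left_mono abs_deriv2_kernel_integral_le_off_support[OF \<beta> ab bx(1) u_cont]
        abs_bspline_le[OF n] vanish) simp_all
  also have "\<dots> \<le> \<bar>1 / Gamma (2 - \<alpha>)\<bar>
      * (\<bar>\<beta> * (\<beta> - 1)\<bar> * (2 ^ p * (x - b) powr (\<beta> - 2) * ((real p + 1) * (x - b))))"
    using ba by (intro mult_left_mono) auto
  also have "\<dots> = C * ((x - b) powr (\<beta> - 2) * (x - b))"
    by (simp add: C_def)
  also have "(x - b) powr (\<beta> - 2) * (x - b) = (x - b) powr (- \<alpha>)"
    using bx(1) by (simp add: mult.commute powr_mult_base \<beta>_def)
  finally show "\<bar>RL_left \<alpha> (bspline p n p j) (greville p n i)\<bar> \<le> C * (greville p n i - knot p n (j + p + 1)) powr (- \<alpha>)"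
    by (simp add: x_def b_def)
qed

theorem lemma6p1:
  fixes \<alpha> :: real and p :: nat
  assumes "1 < \<alpha>" and "\<alpha> < 2" and "p \<ge> 2"
  shows "\<exists>c :: real. \<forall>n :: nat. n \<ge> 1 \<longrightarrow>
     (\<forall>i \<in> {2..n+p-1}. \<forall>j \<in> {2..n+p-1}.
        \<bar>AL \<alpha> p n (i - 1) (j - 1)\<bar> \<le>
          (if greville p n i \<le> knot p n j then 0
           else if greville p n i \<le> knot p n (j + p + 1) + 1 / real n
             then c * real n powr \<alpha>
           else c * (greville p n i - knot p n (j + p + 1)) powr (- \<alpha>)))"
proof -
  have "0 < \<alpha>" "-1 < \<alpha>"
    using assms(1) by simp_all
  obtain C_near where near: "\<And>n i j. n \<ge> 1 \<Longrightarrow> i \<in> {2..n + p - 1} \<Longrightarrow>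
      \<bar>RL_left \<alpha> (bspline p n p j) (greville p n i)\<bar> \<le> C_near * real n powr \<alpha>"
    using abs_RL_left_bspline_le_near \<open>0 < \<alpha>\<close> assms(2,3) by blast
  obtain C_far where far: "\<And>n i j. n \<ge> 1 \<Longrightarrow> i \<in> {2..n + p - 1} \<Longrightarrow>
      knot p n (j + p + 1) + 1 / real n < greville p n i \<Longrightarrow>
      \<bar>RL_left \<alpha> (bspline p n p j) (greville p n i)\<bar> \<le> C_far * (greville p n i - knot p n (j + p + 1)) powr (- \<alpha>)"
    using abs_RL_left_bspline_le_far \<open>-1 < \<alpha>\<close> assms(2,3) by blast
  show ?thesis
  proof (intro exI[of _ "max C_near C_far"] allI impI ballI)
    fix n i j assume n: "n \<ge> 1" and i: "i \<in> {2..n + p - 1}" and j: "j \<in> {2..n + p - 1}"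
    have AL: "AL \<alpha> p n (i - 1) (j - 1) = RL_left \<alpha> (bspline p n p j) (greville p n i)"
      using i j by (simp add: AL_def)
    have "C_near * real n powr \<alpha> \<le> max C_near C_far * real n powr \<alpha>"
      "C_far * (greville p n i - knot p n (j + p + 1)) powr (- \<alpha>)
        \<le> max C_near C_far * (greville p n i - knot p n (j + p + 1)) powr (- \<alpha>)"
      by (simp_all add: mult_right_mono)
    then show "\<bar>AL \<alpha> p n (i - 1) (j - 1)\<bar> \<le>
          (if greville p n i \<le> knot p n j then 0
           else if greville p n i \<le> knot p n (j + p + 1) + 1 / real n
             then max C_near C_far * real n powr \<alpha>
           else max C_near C_far * (greville p n i - knot p n (j + p + 1)) powr (- \<alpha>))"
      unfolding AL using RL_left_bspline_eq_0[OF assms(2) n assms(3) i] near[OF n i, of j] far[OF n i, of j]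
      by (simp add: not_le) (blast intro: order.trans)
  qed
qed

end
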